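(* Let $r\ge 2$ and $k\ge 2$, let $H=(V,\mathcal{E})$ be an $r$-uniform hypergraph and let $c$ be a Nash equilibrium $k$-coloring of $H$ for the game with CF players. Let $j(e)=|\{v\in e: c(e\setminus\{v\})=c(e)\}|$ for $e\in\mathcal{E}$ and $\hat j=\sum_{e\in\mathcal{E}}j(e)$. Then (1) $\hat j\le \dfrac{|\mathcal{E}|\,r(r-1)}{\frac r2+k-1}$; (2) $SW(c)\ge |\mathcal{E}|\,r\,\dfrac{2k-r}{2k+r-2}$.
   Context: A hypergraph $H=(V,\mathcal{E})$ consists of a finite set $V$ of vertices and a finite set $\mathcal{E}$ of nonempty subsets of $V$; it is $r$-uniform if $|e|=r$ for all $e\in\mathcal{E}$. A $k$-coloring is a map $c:V\to[k]$; for $S\subseteq V$, $c(S)$ is the set of colors of vertices of $S$. $\mathcal{E}(v)=\{e\in\mathcal{E}: v\in e\}$. With CF (conflict-free seeking) players, $u_v(c)=|\{e\in\mathcal{E}(v): |c(e)|=|c(e\setminus\{v\})|+1\}|$, and $SW(c)=\sum_{v\in V}u_v(c)$. A coloring $c$ is a Nash equilibrium if $u_v(c)\ge u_v(c_{-v},i)$ for all $v\in V$, $i\in[k]$, where $(c_{-v},i)$ is $c$ with the color of $v$ replaced by $i$. *)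

theory Defs
  imports Complex_Main
begin

definition hypergraph :: "'a set \<Rightarrow> 'a set set \<Rightarrow> bool" where
  "hypergraph V E \<longleftrightarrow> finite V \<and> (\<forall>e\<in>E. e \<noteq> {} \<and> e \<subseteq> V)"

definition uniform :: "nat \<Rightarrow> 'a set set \<Rightarrow> bool" where
  "uniform r E \<longleftrightarrow> (\<forall>e\<in>E. card e = r)"

definition is_coloring :: "nat \<Rightarrow> 'a set \<Rightarrow> ('a \<Rightarrow> nat) \<Rightarrow> bool" where
  "is_coloring k V c \<longleftrightarrow> (\<forall>v\<in>V. c v \<in> {1..k})"

definition utility :: "'a set set \<Rightarrow> ('a \<Rightarrow> nat) \<Rightarrow> 'a \<Rightarrow> nat" where
  "utility E c v = card {e\<in>E. v \<in> e \<and> card (c ` e) = card (c ` (e - {v})) + 1}"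

definition social_welfare :: "'a set \<Rightarrow> 'a set set \<Rightarrow> ('a \<Rightarrow> nat) \<Rightarrow> nat" where
  "social_welfare V E c = (\<Sum>v\<in>V. utility E c v)"

definition nash_eq :: "nat \<Rightarrow> 'a set \<Rightarrow> 'a set set \<Rightarrow> ('a \<Rightarrow> nat) \<Rightarrow> bool" where
  "nash_eq k V E c \<longleftrightarrow> (\<forall>v\<in>V. \<forall>i\<in>{1..k}. utility E (c(v := i)) v \<le> utility E c v)"

definition jval :: "('a \<Rightarrow> nat) \<Rightarrow> 'a set \<Rightarrow> nat" where
  "jval c e = card {v\<in>e. c ` (e - {v}) = c ` e}"

definition jhat :: "'a set set \<Rightarrow> ('a \<Rightarrow> nat) \<Rightarrow> nat" where
  "jhat E c = (\<Sum>e\<in>E. jval c e)"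

end

theory Submission
  imports Defs
begin

(* In a Nash equilibrium no recolouring of a vertex v pays off. Averaging over the k possible
   colours, and noting that colour i is new in an edge e containing v for exactly
   k - |c(e - {v})| values of i, gives  sum over e containing v of (k - |c(e - {v})|) <= k u_v(c).
   Summing over all vertices and regrouping by edges, this becomes
   |E| r + (k - 1) jhat <= r * sum_e |c(e)|,  while SW(c) = |E| r - jhat.
   The vertices of an edge whose colour is repeated there come in colour classes of size at least
   two, so 2 |c(e)| + j(e) <= 2 r. Combining the two inequalities gives
   (r + 2k - 2) jhat <= 2 |E| r (r - 1), from which both bounds follow. *)

lemma card_image_le_half:
  assumes "finite A" and "\<And>x. x \<in> A \<Longrightarrow> \<exists>y\<in>A. y \<noteq> x \<and> f y = f x"
  shows "2 * card (f ` A) \<le> card A"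
proof -
  have "2 \<le> card {x\<in>A. f x = b}" if "b \<in> f ` A" for b
  proof -
    from that obtain x where x: "x \<in> A" "f x = b" by blast
    with assms(2) obtain y where y: "y \<in> A" "y \<noteq> x" "f y = b" by metis
    have "{x, y} \<subseteq> {x\<in>A. f x = b}" using x y by auto
    from card_mono[OF _ this] show ?thesis using assms(1) y(2) by auto
  qed
  then have "(\<Sum>b\<in>f ` A. 2) \<le> (\<Sum>b\<in>f ` A. card {x\<in>A. f x = b})" by (rule sum_mono)
  also have "\<dots> = card A" using sum.image_gen[OF assms(1), of "\<lambda>_. 1::nat" f] by simp
  finally show ?thesis by simp
qed

lemma hypergraph_finite_edges: "hypergraph V E \<Longrightarrow> finite E"
  unfolding hypergraph_def by (meson Pow_iff finite_Pow_iff finite_subset subsetI)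

lemma hypergraph_finite_edge: "hypergraph V E \<Longrightarrow> e \<in> E \<Longrightarrow> finite e"
  unfolding hypergraph_def by (meson finite_subset)

lemma image_Diff_singleton_eq_iff:
  "v \<in> e \<Longrightarrow> c ` (e - {v}) = c ` e \<longleftrightarrow> c v \<in> c ` (e - {v})"
  by blast

lemma card_image_eq_Suc_iff:
  assumes "finite e" and "v \<in> e"
  shows "card (c ` e) = card (c ` (e - {v})) + 1 \<longleftrightarrow> c v \<notin> c ` (e - {v})"
proof -
  have "c ` e = insert (c v) (c ` (e - {v}))" using assms(2) by blast
  then show ?thesis using assms(1) by (simp add: card_insert_if)
qed

lemma jval_eq: "jval c e = card {v\<in>e. c v \<in> c ` (e - {v})}"
  unfolding jval_def using image_Diff_singleton_eq_iff[of _ e c] by (metis (no_types, lifting))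

lemma jval_add_card_unique:
  assumes "finite e"
  shows "jval c e + card {v\<in>e. c v \<notin> c ` (e - {v})} = card e"
proof -
  let ?J = "{v\<in>e. c v \<in> c ` (e - {v})}" and ?U = "{v\<in>e. c v \<notin> c ` (e - {v})}"
  have "card ?J + card ?U = card (?J \<union> ?U)"
    using assms by (intro card_Un_disjoint[symmetric]) auto
  also have "?J \<union> ?U = e" by blast
  finally show ?thesis unfolding jval_eq .
qed

lemma card_image_jval_le:
  assumes "finite e"
  shows "2 * card (c ` e) + jval c e \<le> 2 * card e"
proof -
  define J where "J = {v\<in>e. c v \<in> c ` (e - {v})}"
  have "J \<subseteq> e" unfolding J_def by blast
  have "2 * card (c ` J) \<le> card J"
  proof (rule card_image_le_half)
    show "finite J" using \<open>J \<subseteq> e\<close> assms finite_subset by blast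
  next
    fix x assume "x \<in> J"
    then have "c x \<in> c ` (e - {x})" unfolding J_def by simp
    then obtain y where y: "y \<in> e - {x}" and "c x = c y" by (rule imageE)
    have "x \<in> e - {y}" using \<open>x \<in> J\<close> \<open>J \<subseteq> e\<close> y by blast
    then have "c y \<in> c ` (e - {y})" unfolding \<open>c x = c y\<close>[symmetric] by (rule imageI)
    then have "y \<in> J" unfolding J_def using y by blast
    then show "\<exists>y\<in>J. y \<noteq> x \<and> c y = c x" using y \<open>c x = c y\<close> by auto
  qed
  moreover have "card (c ` e) \<le> card (e - J) + card (c ` J)"
  proof -
    have "c ` e = c ` (e - J) \<union> c ` J" using \<open>J \<subseteq> e\<close> by blast
    then have "card (c ` e) \<le> card (c ` (e - J)) + card (c ` J)" by (metis card_Un_le)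
    also have "\<dots> \<le> card (e - J) + card (c ` J)" using assms by (simp add: card_image_le)
    finally show ?thesis .
  qed
  moreover have "card (e - J) + card J = card e"
    using \<open>J \<subseteq> e\<close> assms by (simp add: card_Diff_subset card_mono finite_subset)
  ultimately show ?thesis unfolding jval_eq J_def[symmetric] by linarith
qed

lemma utility_fun_upd_self:
  assumes "\<And>e. e \<in> E \<Longrightarrow> finite e"
  shows "utility E (c(v := i)) v = card {e\<in>E. v \<in> e \<and> i \<notin> c ` (e - {v})}"
  unfolding utility_def
proof (intro arg_cong[where f = card] Collect_cong conj_cong refl)
  fix e assume "e \<in> E" and "v \<in> e"
  have "(c(v := i)) ` (e - {v}) = c ` (e - {v})" by auto
  then show "card ((c(v := i)) ` e) = card ((c(v := i)) ` (e - {v})) + 1 \<longleftrightarrow> i \<notin> c ` (e - {v})"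
    using card_image_eq_Suc_iff[OF assms[OF \<open>e \<in> E\<close>] \<open>v \<in> e\<close>, of "c(v := i)"] by simp
qed

lemma utility_eq_card_unique:
  assumes "\<And>e. e \<in> E \<Longrightarrow> finite e"
  shows "utility E c v = card {e\<in>E. v \<in> e \<and> c v \<notin> c ` (e - {v})}"
  using utility_fun_upd_self[OF assms, where c = c and v = v and i = "c v"] by simp

lemma nash_vertex_inequality:
  assumes H: "hypergraph V E" and C: "is_coloring k V c" and N: "nash_eq k V E c"
    and v: "v \<in> V"
  shows "(\<Sum>e\<in>{e\<in>E. v \<in> e}. k - card (c ` (e - {v}))) \<le> k * utility E c v"
proof -
  let ?E = "{e\<in>E. v \<in> e}"
  have "(\<Sum>e\<in>?E. k - card (c ` (e - {v}))) = (\<Sum>e\<in>?E. card {i\<in>{1..k}. i \<notin> c ` (e - {v})})"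
  proof (rule sum.cong[OF refl])
    fix e assume "e \<in> ?E"
    then have "c ` (e - {v}) \<subseteq> {1..k}"
      using H C unfolding hypergraph_def is_coloring_def by blast
    moreover have "{i\<in>{1..k}. i \<notin> c ` (e - {v})} = {1..k} - c ` (e - {v})" by blast
    ultimately show "k - card (c ` (e - {v})) = card {i\<in>{1..k}. i \<notin> c ` (e - {v})}"
      by (simp add: card_Diff_subset finite_subset)
  qed
  also have "\<dots> = (\<Sum>i\<in>{1..k}. card {e\<in>?E. i \<notin> c ` (e - {v})})"
    by (rule sum_multicount_gen[symmetric]) (use hypergraph_finite_edges[OF H] in auto)
  also have "\<dots> = (\<Sum>i\<in>{1..k}. utility E (c(v := i)) v)"
    using utility_fun_upd_self[OF hypergraph_finite_edge[OF H]]
    by (intro sum.cong refl) simp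
  also have "\<dots> \<le> card {1..k} * utility E c v"
    using sum_bounded_above[of "{1..k}" "\<lambda>i. utility E (c(v := i)) v" "utility E c v"] N v
    unfolding nash_eq_def by simp
  finally show ?thesis by simp
qed

lemma social_welfare_eq_sum_edges:
  assumes H: "hypergraph V E"
  shows "social_welfare V E c = (\<Sum>e\<in>E. card e - jval c e)"
proof -
  have "social_welfare V E c = (\<Sum>v\<in>V. card {e\<in>E. v \<in> e \<and> c v \<notin> c ` (e - {v})})"
    unfolding social_welfare_def using utility_eq_card_unique[OF hypergraph_finite_edge[OF H]]
    by simp
  also have "\<dots> = (\<Sum>e\<in>E. card e - jval c e)"
  proof (rule sum_multicount_gen)
    show "finite V" "finite E"
      using H hypergraph_finite_edges unfolding hypergraph_def by auto
    show "\<forall>e\<in>E. card {v\<in>V. v \<in> e \<and> c v \<notin> c ` (e - {v})} = card e - jval c e"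
    proof
      fix e assume "e \<in> E"
      then have "{v\<in>V. v \<in> e \<and> c v \<notin> c ` (e - {v})} = {v\<in>e. c v \<notin> c ` (e - {v})}"
        using H unfolding hypergraph_def by blast
      then show "card {v\<in>V. v \<in> e \<and> c v \<notin> c ` (e - {v})} = card e - jval c e"
        using jval_add_card_unique[OF hypergraph_finite_edge[OF H \<open>e \<in> E\<close>], of c] by simp
    qed
  qed
  finally show ?thesis .
qed

lemma sum_card_missing_colours:
  assumes "finite e" and "c ` e \<subseteq> {1..k}"
  shows "(\<Sum>v\<in>e. k - card (c ` (e - {v}))) + card e * card (c ` e) + jval c e
    = card e * (k + 1)"
proof -
  have "card (c ` (e - {v})) \<le> k" for v
    using assms(2) card_mono[of "{1..k}" "c ` (e - {v})"] by auto
  then have missing: "(\<Sum>v\<in>e. k - card (c ` (e - {v}))) + (\<Sum>v\<in>e. card (c ` (e - {v})))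
      = card e * k"
    by (simp flip: sum.distrib)
  have "(\<Sum>v\<in>e. card (c ` (e - {v})) + of_bool (c v \<notin> c ` (e - {v}))) = (\<Sum>v\<in>e. card (c ` e))"
  proof (rule sum.cong[OF refl])
    fix v assume "v \<in> e"
    show "card (c ` (e - {v})) + of_bool (c v \<notin> c ` (e - {v})) = card (c ` e)"
      using card_image_eq_Suc_iff[OF assms(1) \<open>v \<in> e\<close>, where c = c]
        image_Diff_singleton_eq_iff[OF \<open>v \<in> e\<close>, of c] by auto
  qed
  then have present: "(\<Sum>v\<in>e. card (c ` (e - {v}))) + card {v\<in>e. c v \<notin> c ` (e - {v})}
      = card e * card (c ` e)"
    using assms(1) by (simp add: sum.distrib Collect_conj_eq Int_commute)
  show ?thesis
    using missing present jval_add_card_unique[OF assms(1), of c] by (simp add: algebra_simps)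
qed

lemma social_welfare_uniform:
  assumes H: "hypergraph V E" and U: "uniform r E"
  shows "real (social_welfare V E c) = real (card E) * real r - real (jhat E c)"
proof -
  have "jval c e \<le> r" if "e \<in> E" for e
    using jval_add_card_unique[OF hypergraph_finite_edge[OF H that], of c] U that
    unfolding uniform_def by simp
  then have "(\<Sum>e\<in>E. r - jval c e) + (\<Sum>e\<in>E. jval c e) = (\<Sum>e\<in>E. r)"
    by (simp flip: sum.distrib)
  moreover have "(\<Sum>e\<in>E. card e - jval c e) = (\<Sum>e\<in>E. r - jval c e)"
    using U unfolding uniform_def by simp
  ultimately have "social_welfare V E c + jhat E c = card E * r"
    unfolding social_welfare_eq_sum_edges[OF H] jhat_def by simp
  then show ?thesis
    by (simp flip: of_nat_mult of_nat_add)
qed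

lemma nash_edge_inequality:
  assumes H: "hypergraph V E" and C: "is_coloring k V c" and N: "nash_eq k V E c"
  shows "(\<Sum>e\<in>E. \<Sum>v\<in>e. k - card (c ` (e - {v}))) \<le> k * social_welfare V E c"
proof -
  have "finite V" and incident: "\<And>e. e \<in> E \<Longrightarrow> {v\<in>V. v \<in> e} = e"
    using H unfolding hypergraph_def by auto
  have "(\<Sum>e\<in>E. \<Sum>v\<in>e. k - card (c ` (e - {v})))
      = (\<Sum>e\<in>E. \<Sum>v\<in>{v\<in>V. v \<in> e}. k - card (c ` (e - {v})))"
    using incident by simp
  also have "\<dots> = (\<Sum>v\<in>V. \<Sum>e\<in>{e\<in>E. v \<in> e}. k - card (c ` (e - {v})))"
    using \<open>finite V\<close> hypergraph_finite_edges[OF H] by (rule sum.swap_restrict[symmetric])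
  also have "\<dots> \<le> (\<Sum>v\<in>V. k * utility E c v)"
    using nash_vertex_inequality[OF H C N] by (rule sum_mono)
  finally show ?thesis
    unfolding social_welfare_def by (simp add: sum_distrib_left)
qed

lemma jhat_inequality:
  assumes H: "hypergraph V E" and U: "uniform r E" and C: "is_coloring k V c"
    and N: "nash_eq k V E c"
  shows "(real r + 2 * real k - 2) * real (jhat E c) \<le> 2 * real (card E) * real r * (real r - 1)"
proof -
  define A where "A = (\<Sum>e\<in>E. \<Sum>v\<in>e. k - card (c ` (e - {v})))"
  define M where "M = (\<Sum>e\<in>E. card (c ` e))"
  have edge: "finite e" "card e = r" "c ` e \<subseteq> {1..k}" if "e \<in> E" for e
    using that hypergraph_finite_edge[OF H] H C U
    unfolding hypergraph_def is_coloring_def uniform_def by blast+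
  have "A + r * M + jhat E c = (\<Sum>e\<in>E. r * (k + 1))"
    unfolding A_def M_def jhat_def sum_distrib_left sum.distrib[symmetric]
    using sum_card_missing_colours[OF edge(1,3)] edge(2) by (intro sum.cong) auto
  from arg_cong[where f = real, OF this]
  have counting: "real A + real r * real M + real (jhat E c) = real (card E) * real r * (real k + 1)"
    by (simp add: algebra_simps)
  have welfare: "real (social_welfare V E c) = real (card E) * real r - real (jhat E c)"
    by (rule social_welfare_uniform[OF H U])
  have "A \<le> k * social_welfare V E c"
    unfolding A_def by (rule nash_edge_inequality[OF H C N])
  then have nash: "real A \<le> real k * real (social_welfare V E c)"
    by (simp flip: of_nat_mult)
  have "(\<Sum>e\<in>E. 2 * card (c ` e) + jval c e) \<le> (\<Sum>e\<in>E. 2 * r)"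
    by (intro sum_mono) (metis card_image_jval_le edge(1,2))
  then have "2 * M + jhat E c \<le> 2 * card E * r"
    unfolding M_def jhat_def by (simp add: sum.distrib sum_distrib_left)
  from of_nat_le_iff[where 'a = real, THEN iffD2, OF this]
  have "2 * real M + real (jhat E c) \<le> 2 * real (card E) * real r"
    by simp
  then have colours: "real r * (2 * real M + real (jhat E c)) \<le> real r * (2 * real (card E) * real r)"
    by (rule mult_left_mono) simp
  show ?thesis
    using counting nash colours unfolding welfare by (simp add: algebra_simps)
qed

theorem mainTheorem6:
  fixes V :: "'a set" and E :: "'a set set" and c :: "'a \<Rightarrow> nat" and r k :: nat
  assumes "r \<ge> 2" and "k \<ge> 2"
    and "hypergraph V E" and "uniform r E"
    and "is_coloring k V c" and "nash_eq k V E c"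
  shows "real (jhat E c) \<le> real (card E) * real r * (real r - 1) / (real r / 2 + real k - 1)
    \<and> real (social_welfare V E c) \<ge>
           real (card E) * real r * (2 * real k - real r) / (2 * real k + real r - 2)"
proof
  have key: "(real r + 2 * real k - 2) * real (jhat E c) \<le> 2 * real (card E) * real r * (real r - 1)"
    using jhat_inequality assms(3-6) .
  have welfare: "real (social_welfare V E c) = real (card E) * real r - real (jhat E c)"
    using social_welfare_uniform assms(3,4) .
  have "real r / 2 + real k - 1 > 0" and pos: "2 * real k + real r - 2 > 0"
    using assms(1,2) by simp_all
  then show "real (jhat E c) \<le> real (card E) * real r * (real r - 1) / (real r / 2 + real k - 1)"
    using key by (simp add: pos_le_divide_eq algebra_simps)
  have "real (card E) * real r * (2 * real k - real r)
      \<le> (real (card E) * real r - real (jhat E c)) * (2 * real k + real r - 2)"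
    using key by (simp add: algebra_simps)
  then show "real (social_welfare V E c) \<ge>
      real (card E) * real r * (2 * real k - real r) / (2 * real k + real r - 2)"
    unfolding welfare by (simp add: pos_divide_le_eq[OF pos])
qed

end
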